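(* Let $n\ge 2$. Every $n$-dimensional non-nilpotent cyclic Leibniz algebra over $\mathbb{C}$ is of type $k$ for one and only one $k\in\{2,\ldots,n\}$.
   Context: A (left) Leibniz algebra is a vector space with a bilinear product such that $x(yz)=(xy)z+y(xz)$ for all $x,y,z$. A cyclic Leibniz algebra is a Leibniz algebra generated by a single element. For an element $x$ set $x^1=x$ and $x^{j+1}=x\,x^j$. In an $n$-dimensional cyclic Leibniz algebra, a generator is an element $x$ such that $\{x,\ldots,x^n\}$ is a basis; for a generator $a$ one always has $aa^n=\alpha_2a^2+\cdots+\alpha_na^n$ for some scalars (no $a$-term). The algebra is called non-nilpotent if a generator $a$ satisfies $aa^n\neq 0$, i.e. $aa^n=\alpha_ka^k+\alpha_{k+1}a^{k+1}+\cdots+\alpha_na^n$ with $2\le k\le n$ and $\alpha_k\neq0$. An $n$-dimensional non-nilpotent cyclic Leibniz algebra is said to be of type $k$ if it has a generator $x$ with $$xx^n=x^k+\gamma_{k+1}x^{k+1}+\cdots+\gamma_nx^n$$ for some $(\gamma_{k+1},\ldots,\gamma_n)\in\mathbb{C}^{n-k}$. *)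

theory Defs
  imports "HOL-Analysis.Analysis"
begin

definition bilinear_prod :: "(complex \<Rightarrow> 'v::ab_group_add \<Rightarrow> 'v) \<Rightarrow> ('v \<Rightarrow> 'v \<Rightarrow> 'v) \<Rightarrow> bool" where
  "bilinear_prod sc pr \<longleftrightarrow>
     (\<forall>x y z. pr (x + y) z = pr x z + pr y z) \<and>
     (\<forall>x y z. pr x (y + z) = pr x y + pr x z) \<and>
     (\<forall>c x y. pr (sc c x) y = sc c (pr x y)) \<and>
     (\<forall>c x y. pr x (sc c y) = sc c (pr x y))"

definition leibniz_algebra :: "(complex \<Rightarrow> 'v::ab_group_add \<Rightarrow> 'v) \<Rightarrow> ('v \<Rightarrow> 'v \<Rightarrow> 'v) \<Rightarrow> bool" where
  "leibniz_algebra sc pr \<longleftrightarrow>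
     vector_space sc \<and> bilinear_prod sc pr \<and>
     (\<forall>x y z. pr x (pr y z) = pr (pr x y) z + pr y (pr x z))"

definition gen_subalg :: "(complex \<Rightarrow> 'v::ab_group_add \<Rightarrow> 'v) \<Rightarrow> ('v \<Rightarrow> 'v \<Rightarrow> 'v) \<Rightarrow> 'v set \<Rightarrow> 'v set" where
  "gen_subalg sc pr S =
     \<Inter>{W. module.subspace sc W \<and> S \<subseteq> W \<and> (\<forall>a\<in>W. \<forall>b\<in>W. pr a b \<in> W)}"

definition cyclic :: "(complex \<Rightarrow> 'v::ab_group_add \<Rightarrow> 'v) \<Rightarrow> ('v \<Rightarrow> 'v \<Rightarrow> 'v) \<Rightarrow> bool" where
  "cyclic sc pr \<longleftrightarrow> (\<exists>x. gen_subalg sc pr {x} = UNIV)"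

text \<open>Left powers: lpow pr x j is x^j for j >= 1, with x^1 = x and x^(j+1) = x x^j.
  (The value at j = 0 is irrelevant and set to x.)\<close>
fun lpow :: "('v \<Rightarrow> 'v \<Rightarrow> 'v) \<Rightarrow> 'v \<Rightarrow> nat \<Rightarrow> 'v" where
  "lpow pr x 0 = x"
| "lpow pr x (Suc 0) = x"
| "lpow pr x (Suc (Suc j)) = pr x (lpow pr x (Suc j))"

definition generator :: "(complex \<Rightarrow> 'v::ab_group_add \<Rightarrow> 'v) \<Rightarrow> ('v \<Rightarrow> 'v \<Rightarrow> 'v) \<Rightarrow> nat \<Rightarrow> 'v \<Rightarrow> bool" where
  "generator sc pr n x \<longleftrightarrow>
     inj_on (lpow pr x) {1..n} \<and>
     \<not> module.dependent sc (lpow pr x ` {1..n}) \<and>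
     module.span sc (lpow pr x ` {1..n}) = UNIV"

definition non_nilpotent :: "(complex \<Rightarrow> 'v::ab_group_add \<Rightarrow> 'v) \<Rightarrow> ('v \<Rightarrow> 'v \<Rightarrow> 'v) \<Rightarrow> nat \<Rightarrow> bool" where
  "non_nilpotent sc pr n \<longleftrightarrow>
     (\<exists>a. generator sc pr n a \<and> pr a (lpow pr a n) \<noteq> 0)"

definition of_type :: "(complex \<Rightarrow> 'v::ab_group_add \<Rightarrow> 'v) \<Rightarrow> ('v \<Rightarrow> 'v \<Rightarrow> 'v) \<Rightarrow> nat \<Rightarrow> nat \<Rightarrow> bool" where
  "of_type sc pr n k \<longleftrightarrow>
     (\<exists>x \<gamma>. generator sc pr n x \<and>
        pr x (lpow pr x n) = lpow pr x k + (\<Sum>j\<in>{k+1..n}. sc (\<gamma> j) (lpow pr x j)))"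

end

theory Submission
  imports Defs "HOL-Computational_Algebra.Fundamental_Theorem_Algebra"
begin

text \<open>
  Left multiplication by any element of the square of a Leibniz algebra is zero. Hence, for a
  generator \<open>x\<close>, an element \<open>y = e\<^sub>1 x + e\<^sub>2 x\<^sup>2 + \<dots>\<close> acts on the left as \<open>e\<^sub>1 L\<^sub>x\<close>.

  Existence: in \<open>a a\<^sup>n = \<Sum> \<alpha>\<^sub>j a\<^sup>j\<close> the coefficient \<open>\<alpha>\<^sub>1\<close> vanishes (multiply by \<open>a\<close> on the
  right). For the least \<open>k\<close> with \<open>\<alpha>\<^sub>k \<noteq> 0\<close>, rescaling \<open>a\<close> by an \<open>(n+1-k)\<close>-th root of
  \<open>\<alpha>\<^sub>k\<^sup>-\<^sup>1\<close> makes the leading coefficient \<open>1\<close>.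

  Uniqueness: a type-\<open>k\<close> relation for \<open>x\<close> says \<open>p(L\<^sub>x) x = 0\<close> for a polynomial \<open>p\<close>.
  Every other generator \<open>y\<close> is a polynomial in \<open>L\<^sub>x\<close> applied to \<open>x\<close>, so \<open>p(L\<^sub>x) y = 0\<close> too,
  and \<open>L\<^sub>x = c\<^sup>-\<^sup>1 L\<^sub>y\<close> turns this into a relation among \<open>y, \<dots>, y\<^sup>n\<^sup>+\<^sup>1\<close> whose coefficient
  at \<open>y\<^sup>k\<close> is nonzero. Comparing with a type-\<open>k'\<close> relation for \<open>y\<close> gives \<open>k' \<le> k\<close>.
\<close>

context vector_space
begin

lemma basis_family_iff_coordinates:
  assumes "finite A"
  shows "inj_on f A \<and> \<not> dependent (f ` A) \<and> span (f ` A) = UNIV \<longleftrightarrow>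
    (\<forall>u. (\<Sum>j\<in>A. scale (u j) (f j)) = 0 \<longrightarrow> (\<forall>j\<in>A. u j = 0)) \<and>
    (\<forall>v. \<exists>u. v = (\<Sum>j\<in>A. scale (u j) (f j)))"
    (is "?basis \<longleftrightarrow> ?unique \<and> ?coords")
proof
  assume basis: ?basis
  then have inj: "inj_on f A" by blast
  have reindex: "(\<Sum>v\<in>f ` A. scale (w v) v) = (\<Sum>j\<in>A. scale (w (f j)) (f j))" for w
    using inj by (simp add: sum.reindex)
  have indep: "\<forall>v\<in>f ` A. w v = 0" if "(\<Sum>v\<in>f ` A. scale (w v) v) = 0" for w
    using basis that assms by (auto simp: dependent_finite)
  have ?unique
  proof (intro allI impI ballI)
    fix u j assume sum_zero: "(\<Sum>j\<in>A. scale (u j) (f j)) = 0" and "j \<in> A"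
    have "(\<Sum>v\<in>f ` A. scale ((u \<circ> inv_into A f) v) v) = (\<Sum>j\<in>A. scale (u j) (f j))"
      unfolding reindex using inj by (intro sum.cong) simp_all
    with sum_zero have "\<forall>v\<in>f ` A. (u \<circ> inv_into A f) v = 0"
      by (intro indep) simp
    then show "u j = 0"
      using inj \<open>j \<in> A\<close> by force
  qed
  moreover have ?coords
  proof
    fix v
    have "v \<in> span (f ` A)"
      using basis by simp
    then obtain w where "v = (\<Sum>v\<in>f ` A. scale (w v) v)"
      using assms by (auto simp: span_finite)
    then show "\<exists>u. v = (\<Sum>j\<in>A. scale (u j) (f j))"
      unfolding reindex by (intro exI[of _ "\<lambda>j. w (f j)"])
  qed
  ultimately show "?unique \<and> ?coords" ..
next
  assume coords: "?unique \<and> ?coords"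
  have inj: "inj_on f A"
  proof (rule inj_onI, rule ccontr)
    fix i j assume "i \<in> A" "j \<in> A" "f i = f j" "i \<noteq> j"
    define u where "u l = (if l = i then 1 else if l = j then -1 else 0 :: 'a)" for l
    have "(\<Sum>l\<in>A. scale (u l) (f l)) =
        (\<Sum>l\<in>A. (if l = i then f i else 0) - (if l = j then f j else 0))"
      by (rule sum.cong) (auto simp: u_def \<open>i \<noteq> j\<close>)
    also have "\<dots> = 0"
      using \<open>i \<in> A\<close> \<open>j \<in> A\<close> \<open>f i = f j\<close> assms by (simp add: sum_subtractf)
    finally have "u i = 0"
      using coords \<open>i \<in> A\<close> by blast
    then show False
      by (simp add: u_def)
  qed
  moreover have "\<not> dependent (f ` A)"
  proof
    assume "dependent (f ` A)"
    then obtain w v where "v \<in> f ` A" "w v \<noteq> 0" "(\<Sum>v\<in>f ` A. scale (w v) v) = 0"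
      using assms by (auto simp: dependent_finite)
    with inj coords show False
      by (auto simp: sum.reindex)
  qed
  moreover have "v \<in> span (f ` A)" for v
  proof -
    obtain u where "v = (\<Sum>j\<in>A. scale (u j) (f j))"
      using coords by blast
    also have "\<dots> \<in> span (f ` A)"
      by (intro span_sum span_scale span_base imageI)
    finally show ?thesis .
  qed
  ultimately show ?basis
    by auto
qed

lemma sum_scale_eq_leading_term:
  fixes m n k :: nat
  assumes "k \<in> {m..n}" and "\<And>j. j \<in> {m..<k} \<Longrightarrow> g j = 0" and "g k = 1"
  shows "(\<Sum>j=m..n. scale (g j) (f j)) = f k + (\<Sum>j=k+1..n. scale (g j) (f j))"
proof -
  have "(\<Sum>j=m..n. scale (g j) (f j)) =
      (\<Sum>j=m..<k. scale (g j) (f j)) + (\<Sum>j=k..n. scale (g j) (f j))"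
    using assms(1) sum.atLeastLessThan_concat[of m k "Suc n", symmetric]
    by (simp add: atLeastLessThanSuc_atLeastAtMost)
  also have "(\<Sum>j=m..<k. scale (g j) (f j)) = 0"
    by (intro sum.neutral) (simp add: assms(2))
  also have "(\<Sum>j=k..n. scale (g j) (f j)) = scale (g k) (f k) + (\<Sum>j=k+1..n. scale (g j) (f j))"
    using assms(1) sum.atLeast_Suc_atMost[of k n] by simp
  finally show ?thesis
    by (simp add: assms(3))
qed

lemma linear_funpow:
  assumes "Vector_Spaces.linear scale scale T"
  shows "Vector_Spaces.linear scale scale (T ^^ l)"
proof (induction l)
  case (Suc l)
  then show ?case
    using Vector_Spaces.linear_compose[OF Suc assms] by (simp add: comp_def)
qed (simp add: linear_id flip: id_def)

lemma funpow_relation_transfer: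
  assumes T: "Vector_Spaces.linear scale scale T"
    and rel: "(T ^^ n) x = (\<Sum>j\<in>A. scale (a j) ((T ^^ g j) x))"
    and y: "y = (\<Sum>i\<in>B. scale (e i) ((T ^^ h i) x))"
  shows "(T ^^ n) y = (\<Sum>j\<in>A. scale (a j) ((T ^^ g j) y))"
proof -
  interpret hom: module_hom scale scale "T ^^ l" for l
    using linear_funpow[OF T] by (simp add: linear_iff_module_hom)
  have comm: "(T ^^ l) ((T ^^ m) v) = (T ^^ m) ((T ^^ l) v)" for l m v
    by (metis add.commute comp_apply funpow_add)
  have "(T ^^ n) y = (\<Sum>i\<in>B. scale (e i) ((T ^^ h i) ((T ^^ n) x)))"
    by (simp add: y hom.sum hom.scale comm)
  also have "\<dots> = (\<Sum>i\<in>B. \<Sum>j\<in>A. scale (a j) (scale (e i) ((T ^^ g j) ((T ^^ h i) x))))"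
    by (simp add: rel hom.sum hom.scale comm scale_sum_right mult.commute)
  also have "\<dots> = (\<Sum>j\<in>A. scale (a j) ((T ^^ g j) y))"
    by (subst sum.swap) (simp add: y hom.sum hom.scale scale_sum_right)
  finally show ?thesis .
qed

end

lemma lpow_Suc: "1 \<le> j \<Longrightarrow> lpow pr x (Suc j) = pr x (lpow pr x j)"
  by (cases j) auto

lemma lpow_Suc_eq_funpow: "lpow pr x (Suc l) = (pr x ^^ l) x"
  by (induction l) auto

lemma lpow_eq_funpow: "1 \<le> j \<Longrightarrow> lpow pr x j = (pr x ^^ (j - 1)) x"
  using lpow_Suc_eq_funpow[of pr x "j - 1"] by simp

locale complex_leibniz_algebra =
  fixes sc :: "complex \<Rightarrow> 'v::ab_group_add \<Rightarrow> 'v" and pr :: "'v \<Rightarrow> 'v \<Rightarrow> 'v"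
  assumes leibniz_algebra: "leibniz_algebra sc pr"
begin

sublocale vector_space sc
  using leibniz_algebra by (simp add: leibniz_algebra_def)

lemma pr_add_left: "pr (a + b) z = pr a z + pr b z"
  and pr_add_right: "pr z (a + b) = pr z a + pr z b"
  and pr_scale_left: "pr (sc c a) z = sc c (pr a z)"
  and pr_scale_right: "pr z (sc c a) = sc c (pr z a)"
  and leibniz_identity: "pr x (pr y z) = pr (pr x y) z + pr y (pr x z)"
  using leibniz_algebra unfolding leibniz_algebra_def bilinear_prod_def by blast+

lemma pr_zero_left: "pr 0 z = 0"
  using pr_add_left[of 0 0 z] by simp

lemma pr_zero_right: "pr z 0 = 0"
  using pr_add_right[of z 0 0] by simp

lemma pr_sum_left: "pr (sum f A) z = (\<Sum>i\<in>A. pr (f i) z)"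
  by (induction A rule: infinite_finite_induct) (simp_all add: pr_add_left pr_zero_left)

lemma linear_left_mult: "Vector_Spaces.linear sc sc (pr x)"
  using leibniz_algebra unfolding Vector_Spaces.linear_iff leibniz_algebra_def
  by (simp add: pr_add_right pr_scale_right)

lemma pr_lpow_left_eq_zero: "2 \<le> j \<Longrightarrow> pr (lpow pr x j) z = 0"
proof (induction j arbitrary: z rule: nat_induct_at_least)
  case base
  show ?case
    using leibniz_identity[of x x z] by (simp add: numeral_2_eq_2)
next
  case (Suc j)
  then show ?case
    using leibniz_identity[of x "lpow pr x j" z] by (simp add: lpow_Suc pr_zero_right)
qed

lemma pr_combination_left:
  assumes "1 \<le> n"
  shows "pr (\<Sum>j=1..n. sc (e j) (lpow pr x j)) z = sc (e 1) (pr x z)"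
proof -
  have "pr (\<Sum>j=1..n. sc (e j) (lpow pr x j)) z =
      (\<Sum>j=1..n. sc (e j) (pr (lpow pr x j) z))"
    by (simp add: pr_sum_left pr_scale_left)
  also have "\<dots> = (\<Sum>j\<in>{1}. sc (e j) (pr (lpow pr x j) z))"
    using assms by (intro sum.mono_neutral_right) (auto simp: pr_lpow_left_eq_zero)
  finally show ?thesis by simp
qed

lemma lpow_scale: "1 \<le> j \<Longrightarrow> lpow pr (sc c a) j = sc (c ^ j) (lpow pr a j)"
  by (induction j rule: nat_induct_at_least) (simp_all add: lpow_Suc pr_scale_left pr_scale_right)

lemma lpow_of_proportional_left_mult:
  assumes "\<And>z. pr y z = sc c (pr x z)"
  shows "lpow pr y (Suc l) = sc (c ^ l) ((pr x ^^ l) y)"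
  by (induction l) (simp_all add: assms pr_scale_right mult.commute)

lemma generator_iff_coordinates:
  "generator sc pr n x \<longleftrightarrow>
    (\<forall>u. (\<Sum>j=1..n. sc (u j) (lpow pr x j)) = 0 \<longrightarrow> (\<forall>j\<in>{1..n}. u j = 0)) \<and>
    (\<forall>v. \<exists>u. v = (\<Sum>j=1..n. sc (u j) (lpow pr x j)))"
  unfolding generator_def by (rule basis_family_iff_coordinates) simp

lemma generator_lpow_nonzero:
  "generator sc pr n x \<Longrightarrow> j \<in> {1..n} \<Longrightarrow> lpow pr x j \<noteq> 0"
  unfolding generator_def using dependent_zero by force

lemma generator_scale:
  assumes "generator sc pr n a" and "c \<noteq> 0"
  shows "generator sc pr n (sc c a)"
  unfolding generator_iff_coordinates
proof (intro conjI allI impI ballI)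
  fix u j assume "(\<Sum>j=1..n. sc (u j) (lpow pr (sc c a) j)) = 0" and "j \<in> {1..n}"
  then have "(\<Sum>j=1..n. sc (u j * c ^ j) (lpow pr a j)) = 0"
    by (simp add: lpow_scale)
  with assms \<open>j \<in> {1..n}\<close> show "u j = 0"
    unfolding generator_iff_coordinates by auto
next
  fix v
  obtain w where "v = (\<Sum>j=1..n. sc (w j) (lpow pr a j))"
    using assms(1) unfolding generator_iff_coordinates by blast
  also have "\<dots> = (\<Sum>j=1..n. sc (w j / c ^ j) (lpow pr (sc c a) j))"
    using assms(2) by (intro sum.cong) (simp_all add: lpow_scale)
  finally show "\<exists>u. v = (\<Sum>j=1..n. sc (u j) (lpow pr (sc c a) j))"
    by (intro exI[of _ "\<lambda>j. w j / c ^ j"])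
qed

lemma relation_coeff_one_eq_zero:
  assumes "2 \<le> n" and "generator sc pr n a"
    and rel: "pr a (lpow pr a n) = (\<Sum>j=1..n. sc (\<alpha> j) (lpow pr a j))"
  shows "\<alpha> 1 = 0"
proof -
  have "pr (pr a (lpow pr a n)) a = sc (\<alpha> 1) (pr a a)"
    unfolding rel using assms(1) by (intro pr_combination_left) simp
  then have "sc (\<alpha> 1) (lpow pr a 2) = pr (pr a (lpow pr a n)) a"
    by (simp add: numeral_2_eq_2)
  also have "\<dots> = 0"
    using pr_lpow_left_eq_zero[of "Suc n" a a] assms(1) by (simp add: lpow_Suc)
  finally show ?thesis
    using generator_lpow_nonzero[OF assms(2), of 2] assms(1) by simp
qed

lemma of_type_if_relation:
  assumes gen: "generator sc pr n a" and k: "2 \<le> k" "k \<le> n"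
    and rel: "pr a (lpow pr a n) = (\<Sum>j=1..n. sc (\<alpha> j) (lpow pr a j))"
    and below: "\<And>j. j \<in> {1..<k} \<Longrightarrow> \<alpha> j = 0" and "\<alpha> k \<noteq> 0"
  shows "of_type sc pr n k"
proof -
  obtain c where c: "c ^ (Suc n - k) = inverse (\<alpha> k)"
    using nth_root_exists[of "Suc n - k"] k by auto
  with \<open>\<alpha> k \<noteq> 0\<close> k have "c \<noteq> 0"
    by (cases "c = 0") (auto simp: zero_power)
  define \<gamma> where "\<gamma> j = c ^ Suc n * \<alpha> j / c ^ j" for j
  have "\<gamma> k = 1"
  proof -
    have "c ^ Suc n = c ^ (Suc n - k) * c ^ k"
      using k by (simp flip: power_add)
    then show ?thesis
      using c \<open>c \<noteq> 0\<close> \<open>\<alpha> k \<noteq> 0\<close> by (simp add: \<gamma>_def)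
  qed
  define x where "x = sc c a"
  have "pr x (lpow pr x n) = sc (c ^ Suc n) (pr a (lpow pr a n))"
    using k lpow_scale[of "Suc n" c a] by (simp add: x_def lpow_Suc)
  also have "\<dots> = (\<Sum>j=1..n. sc (\<gamma> j) (lpow pr x j))"
    unfolding rel scale_sum_right
    using \<open>c \<noteq> 0\<close> by (intro sum.cong) (simp_all add: x_def lpow_scale \<gamma>_def)
  also have "\<dots> = lpow pr x k + (\<Sum>j=k+1..n. sc (\<gamma> j) (lpow pr x j))"
    using k below \<open>\<gamma> k = 1\<close> by (intro sum_scale_eq_leading_term) (simp_all add: \<gamma>_def)
  finally show ?thesis
    using generator_scale[OF gen \<open>c \<noteq> 0\<close>] unfolding of_type_def x_def by blast
qed

lemma ex_of_type_if_non_nilpotent: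
  assumes n: "2 \<le> n" and "non_nilpotent sc pr n"
  shows "\<exists>k\<in>{2..n}. of_type sc pr n k"
proof -
  obtain a where gen: "generator sc pr n a" and "pr a (lpow pr a n) \<noteq> 0"
    using assms(2) unfolding non_nilpotent_def by blast
  obtain \<alpha> where rel: "pr a (lpow pr a n) = (\<Sum>j=1..n. sc (\<alpha> j) (lpow pr a j))"
    using gen unfolding generator_iff_coordinates by blast
  have "\<exists>j. j \<in> {1..n} \<and> \<alpha> j \<noteq> 0"
    using \<open>pr a (lpow pr a n) \<noteq> 0\<close> unfolding rel by (auto intro: sum.neutral)
  define k where "k = (LEAST j. j \<in> {1..n} \<and> \<alpha> j \<noteq> 0)"
  have k: "k \<in> {1..n}" "\<alpha> k \<noteq> 0"
    using LeastI_ex[OF \<open>\<exists>j. _\<close>] by (simp_all add: k_def)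
  have below: "\<alpha> j = 0" if "j \<in> {1..<k}" for j
    using not_less_Least[of j "\<lambda>j. j \<in> {1..n} \<and> \<alpha> j \<noteq> 0"] that k by (auto simp: k_def)
  have "k \<noteq> 1"
    using relation_coeff_one_eq_zero[OF n gen rel] k by auto
  then show ?thesis
    using of_type_if_relation[OF gen _ _ rel below \<open>\<alpha> k \<noteq> 0\<close>] k by auto
qed

lemma type_le_if_generators:
  assumes n: "2 \<le> n" and x: "generator sc pr n x" and y: "generator sc pr n y"
    and k: "k \<in> {1..n}" and k': "k' \<in> {1..n}"
    and rel_x: "pr x (lpow pr x n) = lpow pr x k + (\<Sum>j\<in>{k+1..n}. sc (\<gamma> j) (lpow pr x j))"
    and rel_y: "pr y (lpow pr y n) = lpow pr y k' + (\<Sum>j\<in>{k'+1..n}. sc (\<delta> j) (lpow pr y j))"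
  shows "k' \<le> k"
proof -
  let ?T = "pr x"
  define a where "a j = (if j = k then 1 else if k < j then \<gamma> j else 0)" for j
  define b where "b j = (if j = k' then 1 else if k' < j then \<delta> j else 0)" for j
  have rel_x': "(?T ^^ n) x = (\<Sum>j=1..n. sc (a j) ((?T ^^ (j - 1)) x))"
  proof -
    have "(?T ^^ n) x = pr x (lpow pr x n)"
      using n lpow_eq_funpow[of "Suc n" pr x] by (simp add: lpow_Suc)
    also have "\<dots> = (\<Sum>j=1..n. sc (a j) (lpow pr x j))"
      using k by (subst sum_scale_eq_leading_term) (auto simp: rel_x a_def intro!: sum.cong)
    also have "\<dots> = (\<Sum>j=1..n. sc (a j) ((?T ^^ (j - 1)) x))"
      by (intro sum.cong) (simp_all add: lpow_eq_funpow)
    finally show ?thesis .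
  qed
  obtain e where y_coords: "y = (\<Sum>i=1..n. sc (e i) (lpow pr x i))"
    using x unfolding generator_iff_coordinates by blast
  define c where "c = e 1"
  have y_mult: "pr y z = sc c (pr x z)" for z
    unfolding y_coords c_def using n by (intro pr_combination_left) simp
  have "c \<noteq> 0"
  proof
    assume "c = 0"
    then have "lpow pr y 2 = 0"
      using y_mult[of y] by (simp add: numeral_2_eq_2)
    with generator_lpow_nonzero[OF y, of 2] n show False by simp
  qed
  have y_pow: "(?T ^^ (j - 1)) y = sc (1 / c ^ (j - 1)) (lpow pr y j)" if "1 \<le> j" for j
    using lpow_of_proportional_left_mult[OF y_mult, of "j - 1"] that \<open>c \<noteq> 0\<close> by simp
  have y_funpow: "y = (\<Sum>i=1..n. sc (e i) ((?T ^^ (i - 1)) x))"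
    unfolding y_coords by (intro sum.cong) (simp_all add: lpow_eq_funpow)
  have "(?T ^^ n) y = (\<Sum>j=1..n. sc (a j) ((?T ^^ (j - 1)) y))"
    by (rule funpow_relation_transfer[OF linear_left_mult rel_x' y_funpow])
  also have "\<dots> = (\<Sum>j=1..n. sc (a j / c ^ (j - 1)) (lpow pr y j))"
    using y_pow by (intro sum.cong) (simp_all add: scale_scale)
  finally have "sc (1 / c ^ n) (lpow pr y (Suc n)) =
      (\<Sum>j=1..n. sc (a j / c ^ (j - 1)) (lpow pr y j))"
    using y_pow[of "Suc n"] by simp
  moreover have "lpow pr y (Suc n) = (\<Sum>j=1..n. sc (b j) (lpow pr y j))"
    using n k' by (subst sum_scale_eq_leading_term)
      (auto simp: lpow_Suc rel_y b_def intro!: sum.cong)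
  ultimately have "(\<Sum>j=1..n. sc (a j / c ^ (j - 1) - b j / c ^ n) (lpow pr y j)) = 0"
    by (simp add: scale_sum_right scale_left_diff_distrib sum_subtractf)
  then have "a k / c ^ (k - 1) = b k / c ^ n"
    using y k unfolding generator_iff_coordinates by auto
  then have "b k \<noteq> 0"
    using \<open>c \<noteq> 0\<close> by (auto simp: a_def)
  then show ?thesis
    by (auto simp: b_def split: if_splits)
qed

lemma of_type_unique:
  assumes "2 \<le> n" and "of_type sc pr n k" "of_type sc pr n k'" and "k \<in> {1..n}" "k' \<in> {1..n}"
  shows "k = k'"
proof -
  obtain x \<gamma> where x: "generator sc pr n x"
    "pr x (lpow pr x n) = lpow pr x k + (\<Sum>j\<in>{k+1..n}. sc (\<gamma> j) (lpow pr x j))"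
    using assms(2) unfolding of_type_def by blast
  obtain y \<delta> where y: "generator sc pr n y"
    "pr y (lpow pr y n) = lpow pr y k' + (\<Sum>j\<in>{k'+1..n}. sc (\<delta> j) (lpow pr y j))"
    using assms(3) unfolding of_type_def by blast
  show ?thesis
    using type_le_if_generators[OF assms(1) x(1) y(1) assms(4,5) x(2) y(2)]
      type_le_if_generators[OF assms(1) y(1) x(1) assms(5,4) y(2) x(2)]
    by simp
qed

end

theorem lemma3p3:
  fixes sc :: "complex \<Rightarrow> 'v::ab_group_add \<Rightarrow> 'v"
    and pr :: "'v \<Rightarrow> 'v \<Rightarrow> 'v"
    and n :: nat
  assumes "n \<ge> 2"
    and "leibniz_algebra sc pr"
    and "vector_space.dim sc UNIV = n"
    and "cyclic sc pr"
    and "non_nilpotent sc pr n"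
  shows "\<exists>!k. k \<in> {2..n} \<and> of_type sc pr n k"
proof -
  interpret complex_leibniz_algebra sc pr
    by unfold_locales (fact assms(2))
  obtain k where "k \<in> {2..n}" "of_type sc pr n k"
    using ex_of_type_if_non_nilpotent[OF assms(1,5)] by blast
  moreover have "k' = k" if "k' \<in> {2..n}" "of_type sc pr n k'" for k'
    using of_type_unique[OF assms(1)] that \<open>k \<in> {2..n}\<close> \<open>of_type sc pr n k\<close> by simp
  ultimately show ?thesis
    by blast
qed

end
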